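(* Let $\rho$ be a ray and let $h_0=|\rho|$. Fix one side of $\rho$ (counterclockwise or clockwise), let $\gamma$ be the neighbor of $\rho$ on that side in $\Sigma_{h_0}$, and set $w_s=u_\gamma+s\,u_\rho$ for integers $s\ge 0$. Then for every $h\ge h_0$, a ray $\nu$ is the neighbor of $\rho$ on that side in $\Sigma_h$ if and only if $u_\nu=w_a$ for some $a\ge 0$ such that $|w_a|\le h$ and $|w_s|>h$ for all $s>a$.
   Context: A ray is a half-line $\rho=\mathbb{R}_{\ge 0}v\subset\mathbb{R}^2$ with $v\in\mathbb{Z}^2\setminus\{0\}$; $u_\rho$ is its primitive lattice generator. On $\mathbb{Z}^2$ use the norm $|(x,y)|=\max\{|x|,|y|\}$, and $|\rho|=|u_\rho|$. $\Sigma_h$ is the complete fan whose rays are all rays $\rho$ with $|\rho|\le h$ and whose $2$-dimensional cones are spanned by angularly consecutive such rays. The neighbors of $\rho\in\Sigma_h(1)$ are the two rays of $\Sigma_h$ adjacent to $\rho$ in angular order. *)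

theory Defs
  imports "HOL-Analysis.Analysis"
begin

text \<open>A ray is identified with its primitive lattice generator u in Z^2.\<close>

type_synonym lvec = "int \<times> int"

definition primitive :: "lvec \<Rightarrow> bool" where
  "primitive v \<longleftrightarrow> v \<noteq> (0,0) \<and> gcd (fst v) (snd v) = 1"

definition maxnorm :: "lvec \<Rightarrow> int" where
  "maxnorm v = max \<bar>fst v\<bar> \<bar>snd v\<bar>"

definition to_complex :: "lvec \<Rightarrow> complex" where
  "to_complex v = Complex (of_int (fst v)) (of_int (snd v))"

definition ccw_angle :: "lvec \<Rightarrow> lvec \<Rightarrow> real" where
  "ccw_angle u v = (let t = Arg (to_complex v / to_complex u) in if t < 0 then t + 2 * pi else t)"

definition side_angle :: "bool \<Rightarrow> lvec \<Rightarrow> lvec \<Rightarrow> real" where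
  "side_angle ccw u v = (if ccw then ccw_angle u v else ccw_angle v u)"

definition fan_rays :: "int \<Rightarrow> lvec set" where
  "fan_rays h = {u. primitive u \<and> maxnorm u \<le> h}"

definition fan_neighbor :: "bool \<Rightarrow> int \<Rightarrow> lvec \<Rightarrow> lvec \<Rightarrow> bool" where
  "fan_neighbor ccw h rho nu \<longleftrightarrow>
     rho \<in> fan_rays h \<and> nu \<in> fan_rays h \<and> nu \<noteq> rho \<and>
     \<not> (\<exists>w \<in> fan_rays h. 0 < side_angle ccw rho w \<and> side_angle ccw rho w < side_angle ccw rho nu)"

end

theory Submission
  imports Defs
begin

text \<open>The sign of det2 \<rho> \<nu> tells on which side of \<rho> the ray \<nu> lies, and within the open
  counterclockwise half-plane angles from \<rho> are ordered by det2. The neighbour \<nu> of \<rho> in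
  \<Sigma>_h always satisfies det2 \<rho> \<nu> = 1: otherwise the half-open parallelogram spanned by
  \<rho> and \<nu> contains a further lattice point, which lies in the max-norm ball by convexity and
  would be a ray of \<Sigma>_h between them. So all neighbours lie on the line \<gamma> + \<int> \<rho>, and since
  det2 (\<gamma> + s \<rho>) (\<gamma> + a \<rho>) = s - a, the neighbour in \<Sigma>_h is the point with the largest index
  still inside the ball; that index is \<ge> 0 because \<gamma> stays a ray of \<Sigma>_h. Complex
  conjugation reduces the clockwise side to the counterclockwise one.\<close>

definition det2 :: "lvec \<Rightarrow> lvec \<Rightarrow> int" where
  "det2 u v = fst u * snd v - snd u * fst v"

lemma to_complex_eq_0_iff: "to_complex u = 0 \<longleftrightarrow> u = (0, 0)"
  by (cases u) (auto simp: to_complex_def complex_eq_iff)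

lemma Im_to_complex_divide:
  "Im (to_complex v / to_complex u) = of_int (det2 u v) / ((of_int (fst u))\<^sup>2 + (of_int (snd u))\<^sup>2)"
  by (simp add: to_complex_def Im_divide det2_def algebra_simps)

lemma Re_to_complex_divide:
  "Re (to_complex v / to_complex u) =
     of_int (fst u * fst v + snd u * snd v) / ((of_int (fst u))\<^sup>2 + (of_int (snd u))\<^sup>2)"
  by (simp add: to_complex_def Re_divide algebra_simps)

lemma sum_squares_lvec_pos: "u \<noteq> (0, 0) \<Longrightarrow> (0::real) < (of_int (fst u))\<^sup>2 + (of_int (snd u))\<^sup>2"
  by (cases u) (auto simp: sum_power2_gt_zero_iff)

lemma Im_to_complex_divide_pos_iff:
  "u \<noteq> (0, 0) \<Longrightarrow> 0 < Im (to_complex v / to_complex u) \<longleftrightarrow> 0 < det2 u v"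
  using Im_to_complex_divide[of v u] sum_squares_lvec_pos[of u] by (simp add: zero_less_divide_iff)

lemma ccw_angle_nonneg: "0 \<le> ccw_angle u v"
  using mpi_less_Arg[of "to_complex v / to_complex u"] by (auto simp: ccw_angle_def Let_def)

lemma ccw_angle_less_pi_iff_det2_pos:
  assumes "u \<noteq> (0, 0)"
  shows "0 < ccw_angle u v \<and> ccw_angle u v < pi \<longleftrightarrow> 0 < det2 u v"
proof -
  define z where "z = to_complex v / to_complex u"
  have "ccw_angle u v = (if Arg z < 0 then Arg z + 2 * pi else Arg z)"
    by (simp add: ccw_angle_def z_def Let_def)
  then show ?thesis
    using Im_to_complex_divide_pos_iff[OF assms, of v] Arg_lt_pi[of z] mpi_less_Arg[of z]
    by (auto simp: z_def)
qed

lemma ccw_angle_less_if_det2_pos: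
  assumes "u \<noteq> (0, 0)" "0 < det2 u v1" "0 < det2 u v2" "0 < det2 v1 v2"
  shows "ccw_angle u v1 < ccw_angle u v2"
proof -
  have v1: "v1 \<noteq> (0, 0)" using assms(2) by (auto simp: det2_def)
  define z1 where "z1 = to_complex v1 / to_complex u"
  define z2 where "z2 = to_complex v2 / to_complex u"
  define q where "q = to_complex v2 / to_complex v1"
  have Im_pos: "0 < Im z1" "0 < Im z2" "0 < Im q"
    using Im_to_complex_divide_pos_iff assms v1 by (auto simp: z1_def z2_def q_def)
  then have angles: "ccw_angle u v1 = Arg z1" "ccw_angle u v2 = Arg z2"
    using Arg_lt_pi[of z1] Arg_lt_pi[of z2] by (simp_all add: ccw_angle_def z1_def z2_def Let_def)
  have "z2 = z1 * q" using v1 to_complex_eq_0_iff[of v1] by (simp add: z1_def z2_def q_def)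
  moreover have "z1 \<noteq> 0" "q \<noteq> 0" using Im_pos by auto
  \<comment> \<open>Arg z1, Arg z2, Arg q all lie in (0, pi), so the correction term below must vanish.\<close>
  ultimately have "Arg z2 = Arg z1 + Arg q + (if Arg z1 + Arg q \<in> {-pi<..pi} then 0
                     else if Arg z1 + Arg q > pi then -2 * pi else 2 * pi)"
    using Arg_times' by simp
  then show ?thesis
    using angles Im_pos Arg_lt_pi[of z1] Arg_lt_pi[of q] Arg_lt_pi[of z2] by (auto split: if_splits)
qed

lemma det2_eq_0_imp_multiple:
  assumes "primitive u" "det2 u x = 0"
  obtains m where "x = (m * fst u, m * snd u)"
proof -
  obtain a b where u: "u = (a, b)" by (cases u)
  obtain x1 x2 where x: "x = (x1, x2)" by (cases x)
  from assms(1) obtain s t where st: "s * a + t * b = 1"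
    using bezout_int[of a b] u by (auto simp: primitive_def)
  have cross: "a * x2 = b * x1" using assms(2) u x by (simp add: det2_def)
  have "(s * x1 + t * x2) * a = x1 * (s * a + t * b)"
    by (simp add: algebra_simps flip: cross)
  moreover have "(s * x1 + t * x2) * b = x2 * (s * a + t * b)"
    by (simp add: algebra_simps cross)
  ultimately have "x1 = (s * x1 + t * x2) * a" "x2 = (s * x1 + t * x2) * b"
    using st by simp_all
  with that u x show ?thesis by auto
qed

lemma primitive_if_det2_eq_1: "det2 u w = 1 \<Longrightarrow> primitive w"
proof -
  assume det: "det2 u w = 1"
  have "gcd (fst w) (snd w) dvd det2 u w"
    unfolding det2_def by (intro dvd_diff dvd_mult) auto
  with det have "gcd (fst w) (snd w) = 1" by simp
  moreover have "w \<noteq> (0, 0)" using det by (auto simp: det2_def)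
  ultimately show "primitive w" by (simp add: primitive_def)
qed

lemma exists_det2_eq_1:
  assumes "primitive u"
  obtains e where "det2 u e = 1"
proof -
  from assms obtain s t where "s * fst u + t * snd u = 1"
    using bezout_int[of "fst u" "snd u"] by (auto simp: primitive_def)
  then have "det2 u (- t, s) = 1" by (simp add: det2_def algebra_simps)
  then show ?thesis by (rule that)
qed

lemma ccw_angle_eq_0_imp_eq:
  assumes "primitive u" "primitive v" "ccw_angle u v = 0"
  shows "v = u"
proof -
  have u0: "u \<noteq> (0, 0)" using assms(1) by (simp add: primitive_def)
  define z where "z = to_complex v / to_complex u"
  have "ccw_angle u v = (if Arg z < 0 then Arg z + 2 * pi else Arg z)"
    by (simp add: ccw_angle_def z_def Let_def)
  with assms(3) have "Arg z = 0" using mpi_less_Arg[of z] by (auto split: if_splits)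
  then have real: "Im z = 0" "0 \<le> Re z" by (auto simp: Arg_eq_0 complex_is_Real_iff)
  then have "det2 u v = 0" using Im_to_complex_divide[of v u] sum_squares_lvec_pos[OF u0] u0
    by (cases u) (auto simp: z_def)
  with assms(1) obtain m where m: "v = (m * fst u, m * snd u)" by (rule det2_eq_0_imp_multiple)
  have "0 \<le> real_of_int (fst u * fst v + snd u * snd v)"
    using real(2) Re_to_complex_divide[of v u] sum_squares_lvec_pos[OF u0] by (simp add: z_def zero_le_divide_iff)
  then have "0 \<le> fst u * fst v + snd u * snd v" by (simp only: of_int_0_le_iff)
  then have "0 \<le> m * (fst u * fst u + snd u * snd u)" using m by (simp add: algebra_simps)
  moreover have "0 < fst u * fst u + snd u * snd u" using u0
    by (cases u) (auto simp: sum_squares_gt_zero_iff)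
  ultimately have "0 \<le> m" by (simp add: zero_le_mult_iff)
  moreover have "gcd (fst v) (snd v) = \<bar>m\<bar> * gcd (fst u) (snd u)"
    using m by (simp add: gcd_mult_left abs_mult)
  ultimately have "m = 1" using assms(1,2) by (simp add: primitive_def)
  with m show ?thesis by simp
qed

definition rot90 :: "lvec \<Rightarrow> lvec" where
  "rot90 v = (- snd v, fst v)"

lemma fan_rays_finite: "finite (fan_rays h)"
proof -
  have "fan_rays h \<subseteq> {-h..h} \<times> {-h..h}" by (auto simp: fan_rays_def maxnorm_def)
  then show ?thesis by (rule finite_subset) auto
qed

lemma fan_rays_mono: "h0 \<le> h \<Longrightarrow> fan_rays h0 \<subseteq> fan_rays h"
  by (auto simp: fan_rays_def)

lemma fan_rays_nonzero: "u \<in> fan_rays h \<Longrightarrow> u \<noteq> (0, 0)"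
  by (simp add: fan_rays_def primitive_def)

lemma rot90_in_fan_rays: "u \<in> fan_rays h \<Longrightarrow> rot90 u \<in> fan_rays h"
  by (auto simp: fan_rays_def primitive_def maxnorm_def rot90_def gcd.commute)

lemma det2_rot90_pos: "u \<noteq> (0, 0) \<Longrightarrow> 0 < det2 u (rot90 u)"
  by (cases u) (auto simp: det2_def rot90_def sum_squares_gt_zero_iff)

lemma fan_neighbor_ccwD:
  assumes "fan_neighbor True h \<rho> \<nu>"
  shows "0 < det2 \<rho> \<nu>"
    and "w \<in> fan_rays h \<Longrightarrow> 0 < det2 \<rho> w \<Longrightarrow> \<not> 0 < det2 w \<nu>"
proof -
  have rays: "\<rho> \<in> fan_rays h" "\<nu> \<in> fan_rays h" "\<nu> \<noteq> \<rho>"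
    and none_between: "\<And>w. w \<in> fan_rays h \<Longrightarrow> 0 < ccw_angle \<rho> w \<Longrightarrow> \<not> ccw_angle \<rho> w < ccw_angle \<rho> \<nu>"
    using assms by (auto simp: fan_neighbor_def side_angle_def)
  have \<rho>0: "\<rho> \<noteq> (0, 0)" using rays(1) by (rule fan_rays_nonzero)
  note half_plane = ccw_angle_less_pi_iff_det2_pos[OF \<rho>0]
  show pos: "0 < det2 \<rho> \<nu>"
  proof (rule ccontr)
    assume "\<not> 0 < det2 \<rho> \<nu>"
    moreover have "ccw_angle \<rho> \<nu> \<noteq> 0"
      using ccw_angle_eq_0_imp_eq[of \<rho> \<nu>] rays by (auto simp: fan_rays_def)
    ultimately have "pi \<le> ccw_angle \<rho> \<nu>"
      using half_plane[of \<nu>] ccw_angle_nonneg[of \<rho> \<nu>] by (auto simp: not_less)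
    moreover have "0 < ccw_angle \<rho> (rot90 \<rho>) \<and> ccw_angle \<rho> (rot90 \<rho>) < pi"
      using half_plane det2_rot90_pos[OF \<rho>0] by blast
    ultimately show False using none_between[OF rot90_in_fan_rays[OF rays(1)]] by linarith
  qed
  show "\<not> 0 < det2 w \<nu>" if "w \<in> fan_rays h" "0 < det2 \<rho> w"
    using that none_between half_plane ccw_angle_less_if_det2_pos[OF \<rho>0 _ pos] by blast
qed

lemma fan_neighbor_ccw_exists:
  assumes "\<rho> \<in> fan_rays h"
  obtains \<nu> where "fan_neighbor True h \<rho> \<nu>"
proof -
  define S where "S = {w \<in> fan_rays h. 0 < det2 \<rho> w}"
  have \<rho>0: "\<rho> \<noteq> (0, 0)" using assms by (rule fan_rays_nonzero)
  have "finite S" using fan_rays_finite by (simp add: S_def)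
  moreover have "rot90 \<rho> \<in> S"
    using assms \<rho>0 by (simp add: S_def rot90_in_fan_rays det2_rot90_pos)
  ultimately obtain \<nu> where \<nu>: "\<nu> \<in> S" and least: "\<And>w. w \<in> S \<Longrightarrow> \<not> ccw_angle \<rho> w < ccw_angle \<rho> \<nu>"
    using ex_is_arg_min_if_finite[of S "ccw_angle \<rho>"] by (auto simp: is_arg_min_def)
  note half_plane = ccw_angle_less_pi_iff_det2_pos[OF \<rho>0]
  have "fan_neighbor True h \<rho> \<nu>"
    unfolding fan_neighbor_def side_angle_def if_True
  proof (intro conjI)
    show "\<rho> \<in> fan_rays h" "\<nu> \<in> fan_rays h" "\<nu> \<noteq> \<rho>"
      using assms \<nu> by (auto simp: S_def det2_def)
    have \<nu>_pi: "ccw_angle \<rho> \<nu> < pi" using half_plane[of \<nu>] \<nu> by (simp add: S_def)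
    show "\<not> (\<exists>w\<in>fan_rays h. 0 < ccw_angle \<rho> w \<and> ccw_angle \<rho> w < ccw_angle \<rho> \<nu>)"
    proof
      assume "\<exists>w\<in>fan_rays h. 0 < ccw_angle \<rho> w \<and> ccw_angle \<rho> w < ccw_angle \<rho> \<nu>"
      then obtain w where w: "w \<in> fan_rays h" "0 < ccw_angle \<rho> w" "ccw_angle \<rho> w < ccw_angle \<rho> \<nu>"
        by blast
      then have "w \<in> S" using \<nu>_pi half_plane[of w] by (simp add: S_def)
      with least w(3) show False by blast
    qed
  qed
  then show ?thesis by (rule that)
qed

lemma exists_lattice_point_in_parallelogram:
  assumes "primitive \<rho>" "0 < det2 \<rho> \<nu>"
  obtains z c where "0 \<le> c" "c < det2 \<rho> \<nu>" "det2 \<rho> z = 1"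
    "det2 \<rho> \<nu> * fst z = fst \<nu> + c * fst \<rho>" "det2 \<rho> \<nu> * snd z = snd \<nu> + c * snd \<rho>"
proof -
  define d where "d = det2 \<rho> \<nu>"
  obtain e where e: "det2 \<rho> e = 1" using assms(1) by (rule exists_det2_eq_1)
  have "det2 \<rho> (fst \<nu> - d * fst e, snd \<nu> - d * snd e) = d - d * det2 \<rho> e"
    by (simp add: d_def det2_def algebra_simps)
  with e have "det2 \<rho> (fst \<nu> - d * fst e, snd \<nu> - d * snd e) = 0" by simp
  with assms(1) obtain m where m: "fst \<nu> - d * fst e = m * fst \<rho>" "snd \<nu> - d * snd e = m * snd \<rho>"
    by (elim det2_eq_0_imp_multiple) auto
  define c where "c = (- m) mod d"
  define t where "t = (m + c) div d"
  have c: "0 \<le> c" "c < d" using assms(2) by (simp_all add: c_def d_def)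
  have "(m + c) mod d = 0" unfolding c_def by (simp add: mod_add_right_eq)
  then have mt: "m + c = d * t" unfolding t_def by (metis dvd_eq_mod_eq_0 dvd_mult_div_cancel)
  have scaled: "d * (x + t * a) = n + c * a" if "n - d * x = m * a" for n x a
  proof -
    have "d * (x + t * a) = d * x + (d * t) * a" by (simp add: algebra_simps)
    also have "\<dots> = d * x + (m + c) * a" by (simp add: mt)
    finally show ?thesis using that by (simp add: algebra_simps)
  qed
  define z where "z = (fst e + t * fst \<rho>, snd e + t * snd \<rho>)"
  have "det2 \<rho> z = 1" using e by (simp add: det2_def z_def algebra_simps)
  with c show ?thesis using that scaled[OF m(1)] scaled[OF m(2)] by (simp add: z_def d_def)
qed

lemma abs_le_if_mult_eq_add_mult:
  fixes d c x n a h :: int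
  assumes "0 \<le> c" "c < d" "d * x = n + c * a" "\<bar>n\<bar> \<le> h" "\<bar>a\<bar> \<le> h"
  shows "\<bar>x\<bar> \<le> h"
proof -
  have "d * \<bar>x\<bar> = \<bar>n + c * a\<bar>" using assms(1,2) by (simp add: abs_mult flip: assms(3))
  also have "\<dots> \<le> \<bar>n\<bar> + c * \<bar>a\<bar>" using assms(1) by (simp add: abs_mult abs_triangle_ineq[THEN order_trans])
  also have "\<dots> \<le> h + (d - 1) * h" using assms by (intro add_mono mult_mono) auto
  finally show ?thesis using assms(1,2) by (simp add: algebra_simps)
qed

text \<open>The parallelogram point z of the previous lemma is a ray of \<Sigma>_h by convexity of the
  max-norm ball; it lies strictly between \<rho> and \<nu> unless c = 0, when d divides \<nu>.\<close>
lemma det2_eq_1_if_no_ray_between: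
  assumes "\<rho> \<in> fan_rays h" "\<nu> \<in> fan_rays h" "0 < det2 \<rho> \<nu>"
    and none_between: "\<And>w. w \<in> fan_rays h \<Longrightarrow> 0 < det2 \<rho> w \<Longrightarrow> \<not> 0 < det2 w \<nu>"
  shows "det2 \<rho> \<nu> = 1"
proof (rule ccontr)
  assume "det2 \<rho> \<nu> \<noteq> 1"
  define d where "d = det2 \<rho> \<nu>"
  have d2: "2 \<le> d" using assms(3) \<open>det2 \<rho> \<nu> \<noteq> 1\<close> by (simp add: d_def)
  have prim: "primitive \<rho>" "primitive \<nu>" using assms(1,2) by (simp_all add: fan_rays_def)
  obtain z c where c: "0 \<le> c" "c < d" and z_det: "det2 \<rho> z = 1"
    and dz: "d * fst z = fst \<nu> + c * fst \<rho>" "d * snd z = snd \<nu> + c * snd \<rho>"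
    using exists_lattice_point_in_parallelogram[OF prim(1) assms(3)] unfolding d_def by blast
  have "maxnorm \<rho> \<le> h" "maxnorm \<nu> \<le> h" using assms(1,2) by (simp_all add: fan_rays_def)
  then have "maxnorm z \<le> h"
    using abs_le_if_mult_eq_add_mult[OF c dz(1)] abs_le_if_mult_eq_add_mult[OF c dz(2)]
    by (simp add: maxnorm_def)
  with z_det have z_ray: "z \<in> fan_rays h" using primitive_if_det2_eq_1 by (simp add: fan_rays_def)
  have "d * det2 z \<nu> = (d * fst z) * snd \<nu> - (d * snd z) * fst \<nu>" by (simp add: det2_def algebra_simps)
  also have "\<dots> = (fst \<nu> + c * fst \<rho>) * snd \<nu> - (snd \<nu> + c * snd \<rho>) * fst \<nu>" by (simp only: dz)
  also have "\<dots> = c * d" by (simp add: d_def det2_def algebra_simps)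
  finally have z_\<nu>: "det2 z \<nu> = c" using d2 by simp
  show False
  proof (cases "c = 0")
    case True
    then have "fst \<nu> = d * fst z" "snd \<nu> = d * snd z" using dz by simp_all
    then have "d dvd gcd (fst \<nu>) (snd \<nu>)" by simp
    moreover have "gcd (fst \<nu>) (snd \<nu>) = 1" using prim(2) by (simp add: primitive_def)
    ultimately have "d dvd 1" by simp
    then show False using d2 zdvd_imp_le[of d 1] by simp
  next
    case False
    then show False using none_between[OF z_ray] z_det z_\<nu> c by simp
  qed
qed

lemma fan_neighbor_ccw_det2_eq_1:
  assumes "fan_neighbor True h \<rho> \<nu>"
  shows "det2 \<rho> \<nu> = 1"
proof (rule det2_eq_1_if_no_ray_between)
  show "\<rho> \<in> fan_rays h" "\<nu> \<in> fan_rays h" using assms by (simp_all add: fan_neighbor_def)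
qed (use fan_neighbor_ccwD[OF assms] in auto)

definition lattice_line :: "lvec \<Rightarrow> lvec \<Rightarrow> int \<Rightarrow> lvec" where
  "lattice_line \<gamma> \<rho> s = (fst \<gamma> + s * fst \<rho>, snd \<gamma> + s * snd \<rho>)"

lemma det2_lattice_line: "det2 \<rho> (lattice_line \<gamma> \<rho> s) = det2 \<rho> \<gamma>"
  by (simp add: lattice_line_def det2_def algebra_simps)

lemma det2_lattice_line_lattice_line:
  "det2 (lattice_line \<gamma> \<rho> s) (lattice_line \<gamma> \<rho> a) = (s - a) * det2 \<rho> \<gamma>"
  by (simp add: lattice_line_def det2_def algebra_simps)

lemma on_lattice_line_if_det2_eq:
  assumes "primitive \<rho>" "det2 \<rho> \<nu> = det2 \<rho> \<gamma>"
  obtains a where "\<nu> = lattice_line \<gamma> \<rho> a"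
proof -
  have "det2 \<rho> (fst \<nu> - fst \<gamma>, snd \<nu> - snd \<gamma>) = 0" using assms(2) by (simp add: det2_def algebra_simps)
  with assms(1) obtain a where "fst \<nu> - fst \<gamma> = a * fst \<rho>" "snd \<nu> - snd \<gamma> = a * snd \<rho>"
    by (elim det2_eq_0_imp_multiple) auto
  then have "\<nu> = lattice_line \<gamma> \<rho> a" by (simp add: lattice_line_def prod_eq_iff algebra_simps)
  then show ?thesis by (rule that)
qed

lemma fan_neighbor_ccw_on_lattice_line:
  assumes "fan_neighbor True h \<rho> \<nu>" "\<gamma> \<in> fan_rays h" "det2 \<rho> \<gamma> = 1"
  shows "\<exists>a\<ge>0. \<nu> = lattice_line \<gamma> \<rho> a \<and> maxnorm (lattice_line \<gamma> \<rho> a) \<le> h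
           \<and> (\<forall>s>a. h < maxnorm (lattice_line \<gamma> \<rho> s))"
proof -
  let ?L = "lattice_line \<gamma> \<rho>"
  have rays: "\<rho> \<in> fan_rays h" "\<nu> \<in> fan_rays h" using assms(1) by (simp_all add: fan_neighbor_def)
  note none_between = fan_neighbor_ccwD(2)[OF assms(1)]
  have "det2 \<rho> \<nu> = det2 \<rho> \<gamma>" using fan_neighbor_ccw_det2_eq_1[OF assms(1)] assms(3) by simp
  moreover have "primitive \<rho>" using rays(1) by (simp add: fan_rays_def)
  ultimately obtain a where a: "\<nu> = ?L a" using on_lattice_line_if_det2_eq by metis
  have det_L: "det2 \<rho> (?L s) = 1" "det2 (?L s) (?L a) = s - a" for s
    using assms(3) by (simp_all add: det2_lattice_line det2_lattice_line_lattice_line)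
  have "0 \<le> a"
  proof (rule ccontr)
    assume "\<not> 0 \<le> a"
    then have "0 < det2 (?L 0) \<nu>" using a det_L(2)[of 0] by simp
    moreover have "?L 0 = \<gamma>" by (simp add: lattice_line_def)
    ultimately show False using none_between[OF assms(2)] assms(3) by simp
  qed
  moreover have "maxnorm (?L a) \<le> h" using rays(2) a by (simp add: fan_rays_def)
  moreover have "h < maxnorm (?L s)" if "a < s" for s
  proof (rule ccontr)
    assume "\<not> h < maxnorm (?L s)"
    then have "?L s \<in> fan_rays h" using primitive_if_det2_eq_1[OF det_L(1)] by (simp add: fan_rays_def)
    with none_between have "\<not> 0 < det2 (?L s) \<nu>" using det_L(1) by simp
    then show False using det_L(2) a that by simp
  qed
  ultimately show ?thesis using a by blast
qed

lemma fan_neighbor_ccw_iff_lattice_line: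
  assumes "fan_neighbor True h0 \<rho> \<gamma>" "h0 \<le> h"
  shows "fan_neighbor True h \<rho> \<nu> \<longleftrightarrow>
           (\<exists>a\<ge>0. \<nu> = lattice_line \<gamma> \<rho> a \<and> maxnorm (lattice_line \<gamma> \<rho> a) \<le> h
              \<and> (\<forall>s>a. h < maxnorm (lattice_line \<gamma> \<rho> s)))"
proof -
  let ?L = "lattice_line \<gamma> \<rho>"
  have rays: "\<rho> \<in> fan_rays h" "\<gamma> \<in> fan_rays h"
    using assms fan_rays_mono[OF assms(2)] by (auto simp: fan_neighbor_def)
  have \<gamma>: "det2 \<rho> \<gamma> = 1" using assms(1) by (rule fan_neighbor_ccw_det2_eq_1)
  obtain \<nu>0 where \<nu>0: "fan_neighbor True h \<rho> \<nu>0" using rays(1) by (rule fan_neighbor_ccw_exists)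
  then obtain a0 where a0: "\<nu>0 = ?L a0" "maxnorm (?L a0) \<le> h" "\<forall>s>a0. h < maxnorm (?L s)"
    using fan_neighbor_ccw_on_lattice_line[OF _ rays(2) \<gamma>] by blast
  show ?thesis
  proof
    assume "fan_neighbor True h \<rho> \<nu>"
    then show "\<exists>a\<ge>0. \<nu> = ?L a \<and> maxnorm (?L a) \<le> h \<and> (\<forall>s>a. h < maxnorm (?L s))"
      using fan_neighbor_ccw_on_lattice_line[OF _ rays(2) \<gamma>] by blast
  next
    assume "\<exists>a\<ge>0. \<nu> = ?L a \<and> maxnorm (?L a) \<le> h \<and> (\<forall>s>a. h < maxnorm (?L s))"
    then obtain a where a: "\<nu> = ?L a" "maxnorm (?L a) \<le> h" "\<forall>s>a. h < maxnorm (?L s)"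
      by blast
    have "a = a0" using a(2,3) a0(2,3) by (meson linorder_neqE not_le)
    with \<nu>0 a(1) a0(1) show "fan_neighbor True h \<rho> \<nu>" by simp
  qed
qed

definition cnj_lvec :: "lvec \<Rightarrow> lvec" where
  "cnj_lvec v = (fst v, - snd v)"

lemma cnj_lvec_cnj_lvec [simp]: "cnj_lvec (cnj_lvec v) = v"
  by (simp add: cnj_lvec_def)

lemma cnj_lvec_eq_iff [simp]: "cnj_lvec u = cnj_lvec v \<longleftrightarrow> u = v"
  by (metis cnj_lvec_cnj_lvec)

lemma maxnorm_cnj_lvec [simp]: "maxnorm (cnj_lvec v) = maxnorm v"
  by (simp add: cnj_lvec_def maxnorm_def)

lemma cnj_lvec_in_fan_rays_iff [simp]: "cnj_lvec v \<in> fan_rays h \<longleftrightarrow> v \<in> fan_rays h"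
  by (cases v) (simp add: fan_rays_def primitive_def cnj_lvec_def maxnorm_def)

lemma lattice_line_cnj_lvec: "lattice_line (cnj_lvec \<gamma>) (cnj_lvec \<rho>) s = cnj_lvec (lattice_line \<gamma> \<rho> s)"
  by (simp add: lattice_line_def cnj_lvec_def)

lemma ccw_angle_cnj_lvec: "ccw_angle (cnj_lvec u) (cnj_lvec v) = ccw_angle v u"
proof -
  have to_complex_cnj: "to_complex (cnj_lvec w) = cnj (to_complex w)" for w
    by (simp add: cnj_lvec_def to_complex_def complex_eq_iff)
  have "Arg (cnj (to_complex v / to_complex u)) = Arg (to_complex u / to_complex v)"
  proof (cases "to_complex v / to_complex u = 0")
    case True
    then show ?thesis by auto
  next
    case False
    then have "Arg (cnj (to_complex v / to_complex u)) = Arg (inverse (to_complex v / to_complex u))"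
      by (rule Arg_cnj_eq_inverse)
    then show ?thesis by (simp only: inverse_divide)
  qed
  then show ?thesis by (simp add: ccw_angle_def to_complex_cnj Let_def)
qed

lemma fan_neighbor_cw_iff: "fan_neighbor False h \<rho> \<nu> \<longleftrightarrow> fan_neighbor True h (cnj_lvec \<rho>) (cnj_lvec \<nu>)"
proof -
  have "(\<forall>w\<in>fan_rays h. P (cnj_lvec w)) \<longleftrightarrow> (\<forall>w\<in>fan_rays h. P w)" for P
    by (metis cnj_lvec_cnj_lvec cnj_lvec_in_fan_rays_iff)
  from this[of "\<lambda>w. 0 < ccw_angle (cnj_lvec \<rho>) w \<longrightarrow>
                  \<not> ccw_angle (cnj_lvec \<rho>) w < ccw_angle (cnj_lvec \<rho>) (cnj_lvec \<nu>)"]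
  show ?thesis by (simp add: fan_neighbor_def side_angle_def ccw_angle_cnj_lvec[of \<rho>, symmetric])
qed

lemma fan_neighbor_iff_lattice_line:
  assumes "fan_neighbor ccw h0 \<rho> \<gamma>" "h0 \<le> h"
  shows "fan_neighbor ccw h \<rho> \<nu> \<longleftrightarrow>
           (\<exists>a\<ge>0. \<nu> = lattice_line \<gamma> \<rho> a \<and> maxnorm (lattice_line \<gamma> \<rho> a) \<le> h
              \<and> (\<forall>s>a. h < maxnorm (lattice_line \<gamma> \<rho> s)))"
proof (cases ccw)
  case True
  with assms show ?thesis by (simp add: fan_neighbor_ccw_iff_lattice_line)
next
  case False
  with assms(1) have "fan_neighbor True h0 (cnj_lvec \<rho>) (cnj_lvec \<gamma>)" by (simp add: fan_neighbor_cw_iff)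
  from fan_neighbor_ccw_iff_lattice_line[OF this assms(2), of "cnj_lvec \<nu>"] False show ?thesis
    by (simp add: fan_neighbor_cw_iff lattice_line_cnj_lvec)
qed

theorem mainTheorem9:
  fixes ccw :: bool and rho gamma :: "int \<times> int" and h0 h :: int
  assumes "primitive rho"
    and "h0 = maxnorm rho"
    and "fan_neighbor ccw h0 rho gamma"
    and "h \<ge> h0"
  shows "\<forall>nu. primitive nu \<longrightarrow>
           (fan_neighbor ccw h rho nu \<longleftrightarrow>
             (\<exists>a::int. a \<ge> 0 \<and> nu = (fst gamma + a * fst rho, snd gamma + a * snd rho)
                \<and> maxnorm (fst gamma + a * fst rho, snd gamma + a * snd rho) \<le> h
                \<and> (\<forall>s::int. s > a \<longrightarrow> maxnorm (fst gamma + s * fst rho, snd gamma + s * snd rho) > h)))"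
  using fan_neighbor_iff_lattice_line[OF assms(3,4)] by (simp add: lattice_line_def)

end
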